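(* Let $\mathcal{A}=(A_1,A_2,B,\pi_1,\pi_2)$ be a finite primitive amalgam of degree $(5,2)$ with $A_1\cong\mathrm{Frob}(20)\times C_2$, $B\cong C_4\times C_2$, and $A_2\cong\mathrm{N}_{16}$ or $A_2\cong\mathrm{M}_{16}$. Then every amalgam of the same type as $\mathcal{A}$ is isomorphic to $\mathcal{A}$.
   Context: An amalgam is a 5-tuple $(A_1,A_2,B,\pi_1,\pi_2)$ with monomorphisms $\pi_i:B\to A_i$; degree $(5,2)$ means $|A_1:\pi_1(B)|=5$, $|A_2:\pi_2(B)|=2$; primitive means no nontrivial $K\le B$ has $\pi_i(K)\trianglelefteq A_i$ for both $i$. Two amalgams $(A_1,A_2,B,\pi_1,\pi_2)$, $(C_1,C_2,D,\rho_1,\rho_2)$ have the same type if there are isomorphisms $\alpha:A_1\to C_1,\beta:A_2\to C_2,\gamma:B\to D$ with $\alpha(\pi_1(B))=\rho_1(D)$, $\beta(\pi_2(B))=\rho_2(D)$; they are isomorphic if these can be chosen with $\alpha\pi_1=\rho_1\gamma$, $\beta\pi_2=\rho_2\gamma$. $\mathrm{Frob}(20)$ is the Frobenius group of order 20; $\mathrm{M}_{16}=\langle u,v\mid u^8=v^2=1,u^v=u^5\rangle$; $\mathrm{N}_{16}=\langle (1,2,3,4)(5,6,7,8),(5,7)(6,8),(1,5)(2,6)(3,7)(4,8)\rangle\le S_8$. *)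

theory Defs
  imports "HOL-Algebra.Algebra" "HOL-Combinatorics.Cycles"
begin

definition monomorphism :: "('b, 'x) monoid_scheme \<Rightarrow> ('a, 'y) monoid_scheme \<Rightarrow> ('b \<Rightarrow> 'a) \<Rightarrow> bool"
  where "monomorphism B A \<pi> \<longleftrightarrow> \<pi> \<in> hom B A \<and> inj_on \<pi> (carrier B)"

definition amalgam ::
  "('a1, 'x1) monoid_scheme \<Rightarrow> ('a2, 'x2) monoid_scheme \<Rightarrow> ('b, 'x3) monoid_scheme
   \<Rightarrow> ('b \<Rightarrow> 'a1) \<Rightarrow> ('b \<Rightarrow> 'a2) \<Rightarrow> bool" where
  "amalgam A1 A2 B \<pi>1 \<pi>2 \<longleftrightarrow> group A1 \<and> group A2 \<and> group B \<and>
     monomorphism B A1 \<pi>1 \<and> monomorphism B A2 \<pi>2"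

definition finite_amalgam ::
  "('a1, 'x1) monoid_scheme \<Rightarrow> ('a2, 'x2) monoid_scheme \<Rightarrow> ('b, 'x3) monoid_scheme
   \<Rightarrow> ('b \<Rightarrow> 'a1) \<Rightarrow> ('b \<Rightarrow> 'a2) \<Rightarrow> bool" where
  "finite_amalgam A1 A2 B \<pi>1 \<pi>2 \<longleftrightarrow> amalgam A1 A2 B \<pi>1 \<pi>2 \<and>
     finite (carrier A1) \<and> finite (carrier A2) \<and> finite (carrier B)"

definition amalgam_degree ::
  "('a1, 'x1) monoid_scheme \<Rightarrow> ('a2, 'x2) monoid_scheme \<Rightarrow> ('b, 'x3) monoid_scheme
   \<Rightarrow> ('b \<Rightarrow> 'a1) \<Rightarrow> ('b \<Rightarrow> 'a2) \<Rightarrow> nat \<Rightarrow> nat \<Rightarrow> bool" where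
  "amalgam_degree A1 A2 B \<pi>1 \<pi>2 m n \<longleftrightarrow>
     card (rcosets\<^bsub>A1\<^esub> (\<pi>1 ` carrier B)) = m \<and>
     card (rcosets\<^bsub>A2\<^esub> (\<pi>2 ` carrier B)) = n"

definition primitive_amalgam ::
  "('a1, 'x1) monoid_scheme \<Rightarrow> ('a2, 'x2) monoid_scheme \<Rightarrow> ('b, 'x3) monoid_scheme
   \<Rightarrow> ('b \<Rightarrow> 'a1) \<Rightarrow> ('b \<Rightarrow> 'a2) \<Rightarrow> bool" where
  "primitive_amalgam A1 A2 B \<pi>1 \<pi>2 \<longleftrightarrow>
     (\<forall>K. subgroup K B \<and> normal (\<pi>1 ` K) A1 \<and> normal (\<pi>2 ` K) A2 \<longrightarrow> K = {\<one>\<^bsub>B\<^esub>})"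

definition same_type ::
  "('a1, 'x1) monoid_scheme \<Rightarrow> ('a2, 'x2) monoid_scheme \<Rightarrow> ('b, 'x3) monoid_scheme
   \<Rightarrow> ('b \<Rightarrow> 'a1) \<Rightarrow> ('b \<Rightarrow> 'a2)
   \<Rightarrow> ('c1, 'y1) monoid_scheme \<Rightarrow> ('c2, 'y2) monoid_scheme \<Rightarrow> ('d, 'y3) monoid_scheme
   \<Rightarrow> ('d \<Rightarrow> 'c1) \<Rightarrow> ('d \<Rightarrow> 'c2) \<Rightarrow> bool" where
  "same_type A1 A2 B \<pi>1 \<pi>2 C1 C2 D \<rho>1 \<rho>2 \<longleftrightarrow>
     (\<exists>\<alpha> \<beta> \<gamma>. \<alpha> \<in> iso A1 C1 \<and> \<beta> \<in> iso A2 C2 \<and> \<gamma> \<in> iso B D \<and>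
        \<alpha> ` (\<pi>1 ` carrier B) = \<rho>1 ` carrier D \<and>
        \<beta> ` (\<pi>2 ` carrier B) = \<rho>2 ` carrier D)"

definition isomorphic_amalgams ::
  "('a1, 'x1) monoid_scheme \<Rightarrow> ('a2, 'x2) monoid_scheme \<Rightarrow> ('b, 'x3) monoid_scheme
   \<Rightarrow> ('b \<Rightarrow> 'a1) \<Rightarrow> ('b \<Rightarrow> 'a2)
   \<Rightarrow> ('c1, 'y1) monoid_scheme \<Rightarrow> ('c2, 'y2) monoid_scheme \<Rightarrow> ('d, 'y3) monoid_scheme
   \<Rightarrow> ('d \<Rightarrow> 'c1) \<Rightarrow> ('d \<Rightarrow> 'c2) \<Rightarrow> bool" where
  "isomorphic_amalgams A1 A2 B \<pi>1 \<pi>2 C1 C2 D \<rho>1 \<rho>2 \<longleftrightarrow>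
     (\<exists>\<alpha> \<beta> \<gamma>. \<alpha> \<in> iso A1 C1 \<and> \<beta> \<in> iso A2 C2 \<and> \<gamma> \<in> iso B D \<and>
        (\<forall>b\<in>carrier B. \<alpha> (\<pi>1 b) = \<rho>1 (\<gamma> b)) \<and>
        (\<forall>b\<in>carrier B. \<beta> (\<pi>2 b) = \<rho>2 (\<gamma> b)))"

abbreviation C :: "nat \<Rightarrow> int monoid" where "C n \<equiv> integer_mod_group n"

text \<open>Frobenius group of order 20, realised as AGL(1,5): (a,b) is x \<mapsto> a x + b over Z/5.\<close>
definition Frob20 :: "(int \<times> int) monoid" where
  "Frob20 = \<lparr> carrier = {1..4} \<times> {0..4},
              monoid.mult = (\<lambda>x y. ((fst x * fst y) mod 5, (fst x * snd y + snd x) mod 5)),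
              one = (1,0) \<rparr>"

text \<open>M16 = <u,v | u^8 = v^2 = 1, u^v = u^5>, realised on normal forms u^i v^j.\<close>
definition M16 :: "(int \<times> int) monoid" where
  "M16 = \<lparr> carrier = {0..7} \<times> {0..1},
           monoid.mult = (\<lambda>x y. ((fst x + (if snd x = 0 then fst y else 5 * fst y)) mod 8, (snd x + snd y) mod 2)),
           one = (0,0) \<rparr>"

definition N16 :: "(nat \<Rightarrow> nat) monoid" where
  "N16 = (sym_group 8) \<lparr> carrier := generate (sym_group 8)
      { cycle_of_list [1,2,3,4] \<circ> cycle_of_list [5,6,7,8],
        cycle_of_list [5,7] \<circ> cycle_of_list [6,8],
        cycle_of_list [1,5] \<circ> cycle_of_list [2,6] \<circ> cycle_of_list [3,7] \<circ> cycle_of_list [4,8] } \<rparr>"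

end

theory Submission
  imports Defs
begin

text \<open>
  By Goldschmidt's lemma an amalgam of this type is determined up to isomorphism once every
  automorphism of \<open>B\<close> is the composite of an automorphism induced from \<open>A2\<close> with the inverse of
  one induced from \<open>A1\<close> (induced by automorphisms normalising the image of \<open>B\<close>).
  Write \<open>B = \<langle>t\<rangle> \<times> \<langle>z\<rangle>\<close> with \<open>z\<close> the element sent to the central involution of
  \<open>A1 \<cong> Frob(20) \<times> C2\<close>; it exists because the image of \<open>B\<close> is the centraliser of an element of
  order four. Twisting the \<open>C2\<close> factor by the sign character of \<open>Frob(20)\<close> is an automorphism
  of \<open>A1\<close> inducing \<open>t \<mapsto> t z\<close>, \<open>z \<mapsto> z\<close>. By primitivity \<open>z\<close> is not central in \<open>A2\<close>. As \<open>B\<close> is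
  abelian of index two in \<open>A2\<close>, conjugation by an element outside \<open>B\<close> and the extension of the
  inversion of \<open>B\<close> induce, for a suitable \<open>t\<close>, every automorphism of \<open>B\<close> mapping \<open>t\<close> to \<open>t\<close> or
  \<open>t\<^sup>-\<^sup>1\<close>; and every automorphism of \<open>B\<close> does so after composing, if necessary, with the
  twist. Of \<open>A2\<close> only the index of \<open>B\<close> is used, not its isomorphism type.
\<close>

section \<open>Induced automorphisms and Goldschmidt's criterion\<close>

lemma monomorphism_comp_iso:
  assumes "monomorphism B A \<pi>" "\<gamma> \<in> iso A E"
  shows "monomorphism B E (\<gamma> \<circ> \<pi>)"
proof -
  have "\<pi> \<in> hom B A" "inj_on \<pi> (carrier B)" "\<gamma> \<in> hom A E" "inj_on \<gamma> (carrier A)"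
    using assms by (auto simp: monomorphism_def iso_def bij_betw_def)
  then show ?thesis
    unfolding monomorphism_def
    by (simp add: hom_compose, metis comp_inj_on hom_in_carrier image_subset_iff inj_on_subset)
qed

lemma iso_factor_through_mono:
  assumes "monoid B" "monoid D"
    and f: "f \<in> hom B H" "inj_on f (carrier B)"
    and \<rho>: "\<rho> \<in> hom D H" "inj_on \<rho> (carrier D)"
    and img: "f ` carrier B = \<rho> ` carrier D"
  shows "\<exists>\<sigma>\<in>iso B D. \<forall>b\<in>carrier B. \<rho> (\<sigma> b) = f b"
proof -
  define \<sigma> where "\<sigma> b = inv_into (carrier D) \<rho> (f b)" for b
  have \<sigma>_closed: "\<sigma> b \<in> carrier D" and \<rho>_\<sigma>: "\<rho> (\<sigma> b) = f b" if "b \<in> carrier B" for b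
    using that img unfolding \<sigma>_def by (metis imageI inv_into_into f_inv_into_f)+
  have "\<sigma> \<in> hom B D"
  proof (rule homI)
    fix x y assume x: "x \<in> carrier B" and y: "y \<in> carrier B"
    have "\<rho> (\<sigma> (x \<otimes>\<^bsub>B\<^esub> y)) = \<rho> (\<sigma> x \<otimes>\<^bsub>D\<^esub> \<sigma> y)"
      using x y f(1) \<rho>(1) \<sigma>_closed by (simp add: \<rho>_\<sigma> hom_mult monoid.m_closed[OF \<open>monoid B\<close>])
    then show "\<sigma> (x \<otimes>\<^bsub>B\<^esub> y) = \<sigma> x \<otimes>\<^bsub>D\<^esub> \<sigma> y"
      using x y \<rho>(2) \<sigma>_closed by (meson inj_onD monoid.m_closed assms(1,2))
  qed (rule \<sigma>_closed)
  moreover have "inj_on \<sigma> (carrier B)"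
    using f(2) by (metis \<rho>_\<sigma> inj_on_def)
  moreover have "\<sigma> ` carrier B = carrier D"
  proof (intro subset_antisym subsetI)
    fix d assume d: "d \<in> carrier D"
    then obtain b where b: "b \<in> carrier B" "\<rho> d = f b" using img by (metis imageE imageI)
    then have "d = \<sigma> b" using d \<rho>(2) \<sigma>_closed by (metis \<rho>_\<sigma> inj_onD)
    then show "d \<in> \<sigma> ` carrier B" using b by blast
  qed (use \<sigma>_closed in blast)
  ultimately show ?thesis
    using \<rho>_\<sigma> by (auto simp: iso_def bij_betw_def)
qed

lemma iso_lift_along_monos:
  assumes "group B" "group D" "monomorphism B A \<pi>" "monomorphism D E \<rho>"
    and "\<gamma> \<in> iso A E" "\<gamma> ` \<pi> ` carrier B = \<rho> ` carrier D"
  shows "\<exists>\<sigma>\<in>iso B D. \<forall>b\<in>carrier B. \<rho> (\<sigma> b) = \<gamma> (\<pi> b)"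
proof -
  have "\<gamma> \<circ> \<pi> \<in> hom B E" "inj_on (\<gamma> \<circ> \<pi>) (carrier B)"
    using monomorphism_comp_iso[OF assms(3,5)] by (simp_all add: monomorphism_def)
  then show ?thesis
    using iso_factor_through_mono[of B D "\<gamma> \<circ> \<pi>" E \<rho>] assms
    by (auto simp: monomorphism_def group.is_monoid image_comp)
qed

definition induced_auts :: "('a, 'x) monoid_scheme \<Rightarrow> ('b, 'y) monoid_scheme \<Rightarrow> ('b \<Rightarrow> 'a) \<Rightarrow> ('b \<Rightarrow> 'b) set"
  where "induced_auts A B \<pi> = {r \<in> iso B B. \<exists>a\<in>iso A A. \<forall>b\<in>carrier B. a (\<pi> b) = \<pi> (r b)}"

lemma id_in_induced_auts: "(\<lambda>b. b) \<in> induced_auts A B \<pi>"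
  unfolding induced_auts_def by (auto intro!: bexI[of _ "\<lambda>x. x"] iso_set_refl)

lemma induced_auts_comp:
  assumes "r \<in> induced_auts A B \<pi>" "s \<in> induced_auts A B \<pi>"
  shows "r \<circ> s \<in> induced_auts A B \<pi>"
proof -
  obtain a a' where "a \<in> iso A A" "a' \<in> iso A A"
    and "\<forall>b\<in>carrier B. a (\<pi> b) = \<pi> (r b)" "\<forall>b\<in>carrier B. a' (\<pi> b) = \<pi> (s b)"
    using assms by (auto simp: induced_auts_def)
  moreover have "s b \<in> carrier B" if "b \<in> carrier B" for b
    using assms(2) that by (auto simp: induced_auts_def iso_def hom_def)
  ultimately show ?thesis
    using assms by (auto simp: induced_auts_def intro!: iso_set_trans bexI[of _ "a \<circ> a'"])
qed

lemma induced_auts_cong: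
  assumes "r \<in> induced_auts A B \<pi>" "\<theta> \<in> iso B B" "\<And>b. b \<in> carrier B \<Longrightarrow> \<theta> b = r b"
  shows "\<theta> \<in> induced_auts A B \<pi>"
  using assms by (auto simp: induced_auts_def)

lemma induced_autsI:
  assumes "group A" "group B" "finite (carrier B)" "monomorphism B A \<pi>"
    and a: "a \<in> iso A A" "a ` \<pi> ` carrier B \<subseteq> \<pi> ` carrier B"
  shows "\<exists>r\<in>induced_auts A B \<pi>. \<forall>b\<in>carrier B. \<pi> (r b) = a (\<pi> b)"
proof -
  have \<pi>: "\<pi> \<in> hom B A" "inj_on \<pi> (carrier B)"
    using assms(4) by (auto simp: monomorphism_def)
  have a\<pi>: "a \<circ> \<pi> \<in> hom B A" "inj_on (a \<circ> \<pi>) (carrier B)"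
    using monomorphism_comp_iso[OF assms(4) a(1)] by (simp_all add: monomorphism_def)
  have "card ((a \<circ> \<pi>) ` carrier B) = card (\<pi> ` carrier B)"
    using card_image[OF a\<pi>(2)] card_image[OF \<pi>(2)] by simp
  then have img: "(a \<circ> \<pi>) ` carrier B = \<pi> ` carrier B"
    using a(2) assms(3) card_subset_eq[of "\<pi> ` carrier B" "a ` \<pi> ` carrier B"] by (simp add: image_comp)
  obtain r where "r \<in> iso B B" and r: "\<forall>b\<in>carrier B. \<pi> (r b) = a (\<pi> b)"
    using iso_factor_through_mono[OF _ _ a\<pi> \<pi> img] assms(2)
    by (auto simp: group.is_monoid)
  then show ?thesis
    using a(1) by (auto simp: induced_auts_def intro!: bexI[of _ r] bexI[of _ a])
qed

theorem isomorphic_amalgams_if_induced_auts_factor: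
  assumes "amalgam A1 A2 B \<pi>1 \<pi>2" "amalgam C1 C2 D \<rho>1 \<rho>2"
    and "same_type A1 A2 B \<pi>1 \<pi>2 C1 C2 D \<rho>1 \<rho>2"
    and factor: "\<And>\<theta>. \<theta> \<in> iso B B \<Longrightarrow> \<exists>r\<in>induced_auts A1 B \<pi>1. \<theta> \<circ> r \<in> induced_auts A2 B \<pi>2"
  shows "isomorphic_amalgams A1 A2 B \<pi>1 \<pi>2 C1 C2 D \<rho>1 \<rho>2"
proof -
  have A: "group A1" "group A2" "group B" "monomorphism B A1 \<pi>1" "monomorphism B A2 \<pi>2"
    and C: "group C1" "group C2" "group D" "monomorphism D C1 \<rho>1" "monomorphism D C2 \<rho>2"
    using assms(1,2) by (auto simp: amalgam_def)
  obtain \<alpha> \<beta> where \<alpha>: "\<alpha> \<in> iso A1 C1" "\<alpha> ` \<pi>1 ` carrier B = \<rho>1 ` carrier D"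
    and \<beta>: "\<beta> \<in> iso A2 C2" "\<beta> ` \<pi>2 ` carrier B = \<rho>2 ` carrier D"
    using assms(3) by (auto simp: same_type_def)
  obtain \<sigma>1 where \<sigma>1: "\<sigma>1 \<in> iso B D" "\<forall>b\<in>carrier B. \<rho>1 (\<sigma>1 b) = \<alpha> (\<pi>1 b)"
    using iso_lift_along_monos[OF A(3) C(3) A(4) C(4) \<alpha>] by blast
  obtain \<sigma>2 where \<sigma>2: "\<sigma>2 \<in> iso B D" "\<forall>b\<in>carrier B. \<rho>2 (\<sigma>2 b) = \<beta> (\<pi>2 b)"
    using iso_lift_along_monos[OF A(3) C(3) A(5) C(5) \<beta>] by blast
  \<comment> \<open>\<open>\<theta>\<close> compares the two identifications of \<open>B\<close> with \<open>D\<close>; automorphisms \<open>a1\<close>, \<open>a2\<close>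
    inducing \<open>r\<close> and \<open>\<theta> \<circ> r\<close> correct \<open>\<alpha>\<close> and \<open>\<beta>\<close> so that both agree with \<open>\<sigma>1 \<circ> r\<close>.\<close>
  define \<theta> where "\<theta> = inv_into (carrier B) \<sigma>2 \<circ> \<sigma>1"
  have \<theta>: "\<theta> \<in> iso B B"
    unfolding \<theta>_def using \<sigma>1(1) \<sigma>2(1) A(3) by (metis group.iso_set_sym iso_set_trans)
  have \<sigma>2_\<theta>: "\<sigma>2 (\<theta> b) = \<sigma>1 b" if "b \<in> carrier B" for b
  proof -
    have "\<sigma>1 b \<in> \<sigma>2 ` carrier B"
      using \<sigma>1(1) \<sigma>2(1) that by (auto simp: iso_def bij_betw_def hom_def)
    then show ?thesis by (simp add: \<theta>_def f_inv_into_f)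
  qed
  obtain r a1 where r: "r \<in> iso B B" and a1: "a1 \<in> iso A1 A1" "\<forall>b\<in>carrier B. a1 (\<pi>1 b) = \<pi>1 (r b)"
    and "\<theta> \<circ> r \<in> induced_auts A2 B \<pi>2"
    using factor[OF \<theta>] by (auto simp: induced_auts_def)
  then obtain a2 where a2: "a2 \<in> iso A2 A2" "\<forall>b\<in>carrier B. a2 (\<pi>2 b) = \<pi>2 (\<theta> (r b))"
    by (auto simp: induced_auts_def)
  have r_closed: "r b \<in> carrier B" if "b \<in> carrier B" for b
    using r that by (auto simp: iso_def hom_def)
  show ?thesis
    unfolding isomorphic_amalgams_def
  proof (intro exI conjI ballI)
    show "\<alpha> \<circ> a1 \<in> iso A1 C1" "\<beta> \<circ> a2 \<in> iso A2 C2" "\<sigma>1 \<circ> r \<in> iso B D"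
      using \<alpha>(1) \<beta>(1) \<sigma>1(1) a1(1) a2(1) r by (auto intro: iso_set_trans)
  next
    fix b assume b: "b \<in> carrier B"
    then have rb: "r b \<in> carrier B" "\<theta> (r b) \<in> carrier B"
      using r_closed \<theta> by (auto simp: iso_def hom_def)
    show "(\<alpha> \<circ> a1) (\<pi>1 b) = \<rho>1 ((\<sigma>1 \<circ> r) b)"
      using a1(2) \<sigma>1(2) b rb by simp
    have "(\<beta> \<circ> a2) (\<pi>2 b) = \<rho>2 (\<sigma>2 (\<theta> (r b)))"
      using a2(2) \<sigma>2(2) b rb by simp
    also have "\<dots> = \<rho>2 ((\<sigma>1 \<circ> r) b)"
      using \<sigma>2_\<theta> rb by simp
    finally show "(\<beta> \<circ> a2) (\<pi>2 b) = \<rho>2 ((\<sigma>1 \<circ> r) b)" .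
  qed
qed

lemma involution_subgroup:
  assumes "group G" "c \<in> carrier G" "c \<otimes>\<^bsub>G\<^esub> c = \<one>\<^bsub>G\<^esub>"
  shows "subgroup {\<one>\<^bsub>G\<^esub>, c} G"
proof -
  interpret G: group G by fact
  have "inv\<^bsub>G\<^esub> c = c" using G.inv_equality[OF assms(3,2,2)] .
  then show ?thesis
    using assms(2,3) by (auto intro!: subgroup.intro)
qed

lemma central_involution_image_normal:
  assumes "group A" "group B" "\<pi> \<in> hom B A" "z \<in> carrier B" "z \<otimes>\<^bsub>B\<^esub> z = \<one>\<^bsub>B\<^esub>"
    and central: "\<forall>y\<in>carrier A. y \<otimes>\<^bsub>A\<^esub> \<pi> z = \<pi> z \<otimes>\<^bsub>A\<^esub> y"
  shows "\<pi> ` {\<one>\<^bsub>B\<^esub>, z} \<lhd> A"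
proof -
  interpret A: group A by fact
  have img: "\<pi> ` {\<one>\<^bsub>B\<^esub>, z} = {\<one>\<^bsub>A\<^esub>, \<pi> z}" and \<pi>z: "\<pi> z \<in> carrier A" "\<pi> z \<otimes>\<^bsub>A\<^esub> \<pi> z = \<one>\<^bsub>A\<^esub>"
    using assms(2-5) hom_one[OF assms(3,2,1)] hom_in_carrier[OF assms(3)] by (simp_all flip: hom_mult)
  have "x \<otimes>\<^bsub>A\<^esub> h \<otimes>\<^bsub>A\<^esub> inv\<^bsub>A\<^esub> x \<in> {\<one>\<^bsub>A\<^esub>, \<pi> z}" if "x \<in> carrier A" "h \<in> {\<one>\<^bsub>A\<^esub>, \<pi> z}" for x h
    using that \<pi>z central[rule_format, OF that(1)] by (auto simp: A.m_assoc)
  then show ?thesis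
    unfolding img A.normal_inv_iff using involution_subgroup[OF assms(1) \<pi>z] by blast
qed

lemma primitive_amalgam_no_common_central_involution:
  assumes "amalgam A1 A2 B \<pi>1 \<pi>2" "primitive_amalgam A1 A2 B \<pi>1 \<pi>2"
    and z: "z \<in> carrier B" "z \<otimes>\<^bsub>B\<^esub> z = \<one>\<^bsub>B\<^esub>" "z \<noteq> \<one>\<^bsub>B\<^esub>"
    and central1: "\<forall>y\<in>carrier A1. y \<otimes>\<^bsub>A1\<^esub> \<pi>1 z = \<pi>1 z \<otimes>\<^bsub>A1\<^esub> y"
  shows "\<exists>y\<in>carrier A2. y \<otimes>\<^bsub>A2\<^esub> \<pi>2 z \<noteq> \<pi>2 z \<otimes>\<^bsub>A2\<^esub> y"
proof (rule ccontr)
  assume "\<not> ?thesis"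
  then have central2: "\<forall>y\<in>carrier A2. y \<otimes>\<^bsub>A2\<^esub> \<pi>2 z = \<pi>2 z \<otimes>\<^bsub>A2\<^esub> y" by blast
  have A: "group A1" "group A2" "group B" and \<pi>: "\<pi>1 \<in> hom B A1" "\<pi>2 \<in> hom B A2"
    using assms(1) by (auto simp: amalgam_def monomorphism_def)
  have "{\<one>\<^bsub>B\<^esub>, z} = {\<one>\<^bsub>B\<^esub>}"
    using assms(2) involution_subgroup[OF A(3) z(1,2)]
      central_involution_image_normal[OF A(1,3) \<pi>(1) z(1,2) central1]
      central_involution_image_normal[OF A(2,3) \<pi>(2) z(1,2) central2]
    unfolding primitive_amalgam_def by blast
  then show False using z(3) by blast
qed

section \<open>Groups with an abelian subgroup of index two\<close>

lemma involution_hom_iso: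
  assumes "f \<in> hom G G" "\<And>x. x \<in> carrier G \<Longrightarrow> f (f x) = x"
  shows "f \<in> iso G G"
proof -
  have "f ` carrier G = carrier G"
    using assms by (force simp: hom_def intro: image_eqI[of _ f "f _"])
  moreover have "inj_on f (carrier G)"
    using assms(2) by (metis inj_onI)
  ultimately show ?thesis
    using assms(1) by (simp add: iso_def bij_betw_def)
qed

lemma (in group) inv_mult_cancel_left [simp]:
  "x \<in> carrier G \<Longrightarrow> y \<in> carrier G \<Longrightarrow> inv x \<otimes> (x \<otimes> y) = y"
  by (simp add: m_assoc[symmetric])

lemma (in group) mult_inv_cancel_left [simp]:
  "x \<in> carrier G \<Longrightarrow> y \<in> carrier G \<Longrightarrow> x \<otimes> (inv x \<otimes> y) = y"
  by (simp add: m_assoc[symmetric])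

lemma index_two_decomposition:
  assumes "group G" "subgroup P G" "card (rcosets\<^bsub>G\<^esub> P) = 2"
  obtains g where "g \<in> carrier G" "g \<notin> P" "\<And>x. x \<in> carrier G \<Longrightarrow> x \<in> P \<or> (\<exists>p\<in>P. x = p \<otimes>\<^bsub>G\<^esub> g)"
proof -
  interpret G: group G by fact
  have fin: "finite (rcosets\<^bsub>G\<^esub> P)"
    using assms(3) by (metis card.infinite zero_neq_numeral)
  have coset_in: "P #>\<^bsub>G\<^esub> x \<in> rcosets\<^bsub>G\<^esub> P" if "x \<in> carrier G" for x
    using G.rcosetsI[OF subgroup.subset[OF assms(2)] that] .
  have P_coset: "P #>\<^bsub>G\<^esub> x = P \<longleftrightarrow> x \<in> P" if "x \<in> carrier G" for x
    using that assms(2) G.rcos_self[OF that assms(2)] by (metis subgroup.rcos_const[OF assms(2) assms(1)])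
  have "\<exists>g\<in>carrier G. g \<notin> P"
  proof (rule ccontr)
    assume "\<not> ?thesis"
    then have "rcosets\<^bsub>G\<^esub> P = {P}"
      unfolding RCOSETS_def using P_coset by auto
    then show False using assms(3) by simp
  qed
  then obtain g where g: "g \<in> carrier G" "g \<notin> P" by blast
  have "x \<in> P \<or> (\<exists>p\<in>P. x = p \<otimes>\<^bsub>G\<^esub> g)" if x: "x \<in> carrier G" for x
  proof -
    have "P #>\<^bsub>G\<^esub> x = P \<or> P #>\<^bsub>G\<^esub> x = P #>\<^bsub>G\<^esub> g"
    proof (rule ccontr)
      assume "\<not> ?thesis"
      then have "card {P, P #>\<^bsub>G\<^esub> g, P #>\<^bsub>G\<^esub> x} = 3"
        using P_coset g by (auto simp: card_insert_if)
      moreover have "card {P, P #>\<^bsub>G\<^esub> g, P #>\<^bsub>G\<^esub> x} \<le> card (rcosets\<^bsub>G\<^esub> P)"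
        using coset_in[OF G.one_closed] coset_in[OF g(1)] coset_in[OF x] fin P_coset[OF G.one_closed]
        by (intro card_mono) (auto simp: subgroup.one_closed[OF assms(2)])
      ultimately show False using assms(3) by simp
    qed
    then show ?thesis
      using G.rcos_self[OF x assms(2)] P_coset[OF x] unfolding r_coset_def by auto
  qed
  then show thesis using g that by blast
qed

locale abelian_index_two = group G for G (structure) +
  fixes P g
  assumes subgroup_P: "subgroup P G"
    and P_comm: "\<And>x y. x \<in> P \<Longrightarrow> y \<in> P \<Longrightarrow> x \<otimes> y = y \<otimes> x"
    and g_closed: "g \<in> carrier G" and g_notin: "g \<notin> P"
    and decomp: "\<And>x. x \<in> carrier G \<Longrightarrow> x \<in> P \<or> (\<exists>p\<in>P. x = p \<otimes> g)"
begin

definition conjg where "conjg x = g \<otimes> x \<otimes> inv g"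

text \<open>The extension of the inversion of \<open>P\<close>: it maps \<open>p \<otimes> g\<close> to \<open>inv p \<otimes> inv g\<close>.\<close>
definition invert where "invert x = (if x \<in> P then inv x else conjg (inv x))"

lemma P_closed: "x \<in> P \<Longrightarrow> x \<in> carrier G"
  by (rule subgroup.mem_carrier[OF subgroup_P])

lemma P_mult: "x \<in> P \<Longrightarrow> y \<in> P \<Longrightarrow> x \<otimes> y \<in> P"
  by (rule subgroup.m_closed[OF subgroup_P])

lemma P_inv: "x \<in> P \<Longrightarrow> inv x \<in> P"
  by (rule subgroup.m_inv_closed[OF subgroup_P])

lemma coset_notin: "p \<in> P \<Longrightarrow> p \<otimes> g \<notin> P"
  using P_inv P_mult P_closed g_closed g_notin by (metis inv_solve_left m_closed)

lemma g_square: "g \<otimes> g \<in> P"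
  using decomp[of "g \<otimes> g"] g_closed g_notin P_closed by (metis m_closed r_cancel)

lemma conjg_closed: "x \<in> carrier G \<Longrightarrow> conjg x \<in> carrier G"
  unfolding conjg_def using g_closed by simp

lemma conjg_mult: "x \<in> carrier G \<Longrightarrow> y \<in> carrier G \<Longrightarrow> conjg (x \<otimes> y) = conjg x \<otimes> conjg y"
  unfolding conjg_def using g_closed by (simp add: m_assoc)

lemma g_mult: "x \<in> carrier G \<Longrightarrow> g \<otimes> x = conjg x \<otimes> g"
  unfolding conjg_def using g_closed by (simp add: m_assoc)

lemma conjg_iso: "conjg \<in> iso G G"
proof -
  have "conjg (inv g \<otimes> y \<otimes> g) = y" if "y \<in> carrier G" for y
    unfolding conjg_def using that g_closed by (simp add: m_assoc)
  then have "conjg ` carrier G = carrier G"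
    using conjg_closed g_closed by (force intro: image_eqI[of _ conjg "inv g \<otimes> _ \<otimes> g"])
  moreover have "inj_on conjg (carrier G)"
    by (rule inj_onI) (simp add: conjg_def g_closed)
  ultimately show ?thesis
    by (auto simp: iso_def bij_betw_def hom_def conjg_closed conjg_mult)
qed

lemma conjg_P: "p \<in> P \<Longrightarrow> conjg p \<in> P"
proof (rule ccontr)
  assume p: "p \<in> P" and "conjg p \<notin> P"
  then obtain q where q: "q \<in> P" "conjg p = q \<otimes> g"
    using decomp[of "conjg p"] conjg_closed P_closed by blast
  then have "g \<otimes> p = q \<otimes> (g \<otimes> g)"
    using g_mult p q P_closed g_closed by (simp add: m_assoc)
  then have "g = q \<otimes> (g \<otimes> g) \<otimes> inv p"
    using p q P_closed g_closed by (metis inv_solve_right m_closed)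
  moreover have "q \<otimes> (g \<otimes> g) \<otimes> inv p \<in> P"
    using q p g_square P_mult P_inv by blast
  ultimately show False
    using g_notin by simp
qed

lemma conjg_conjg: "p \<in> P \<Longrightarrow> conjg (conjg p) = p"
proof -
  assume p: "p \<in> P"
  have "conjg (conjg p) = (g \<otimes> g) \<otimes> p \<otimes> inv (g \<otimes> g)"
    unfolding conjg_def using g_closed P_closed[OF p] by (simp add: m_assoc inv_mult_group)
  also have "\<dots> = p"
    using P_comm[OF g_square p] g_closed P_closed[OF p] by (simp add: m_assoc)
  finally show ?thesis .
qed

lemma conjg_fixed_central:
  assumes "p \<in> P" "conjg p = p" "y \<in> carrier G"
  shows "y \<otimes> p = p \<otimes> y"
  using decomp[OF assms(3)]
proof
  assume "y \<in> P" then show ?thesis using P_comm assms(1) by blast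
next
  assume "\<exists>q\<in>P. y = q \<otimes> g"
  then obtain q where q: "q \<in> P" "y = q \<otimes> g" by blast
  then have "y \<otimes> p = q \<otimes> p \<otimes> g"
    using assms g_mult[of p] P_closed g_closed by (simp add: m_assoc)
  also have "\<dots> = p \<otimes> y"
    using P_comm[OF q(1) assms(1)] q P_closed assms(1) g_closed by (simp add: m_assoc)
  finally show ?thesis .
qed

lemma invert_P: "p \<in> P \<Longrightarrow> invert p = inv p"
  unfolding invert_def by simp

lemma invert_coset: "r \<in> P \<Longrightarrow> invert (r \<otimes> g) = inv r \<otimes> inv g"
  unfolding invert_def conjg_def using coset_notin P_closed g_closed
  by (simp add: inv_mult_group m_assoc)

lemma inv_mult_P: "a \<in> P \<Longrightarrow> b \<in> P \<Longrightarrow> inv (a \<otimes> b) = inv a \<otimes> inv b"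
  using P_comm[OF P_inv P_inv, of a b] P_closed by (simp add: inv_mult_group)

lemma invert_mult_P:
  assumes x: "x \<in> P" and y: "y \<in> carrier G"
  shows "invert (x \<otimes> y) = invert x \<otimes> invert y"
  using decomp[OF y]
proof
  assume "y \<in> P"
  then show ?thesis using x P_mult inv_mult_P by (simp add: invert_P)
next
  assume "\<exists>q\<in>P. y = q \<otimes> g"
  then obtain q where q: "q \<in> P" "y = q \<otimes> g" by blast
  then have "x \<otimes> y = (x \<otimes> q) \<otimes> g" using x P_closed g_closed by (simp add: m_assoc)
  then have "invert (x \<otimes> y) = inv (x \<otimes> q) \<otimes> inv g"
    using x q P_mult invert_coset by metis
  then show ?thesis
    using x q inv_mult_P P_closed g_closed by (simp add: invert_P invert_coset m_assoc)
qed

lemma invert_mult_coset: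
  assumes r: "r \<in> P" and y: "y \<in> carrier G"
  shows "invert (r \<otimes> g \<otimes> y) = invert (r \<otimes> g) \<otimes> invert y"
  using decomp[OF y]
proof
  assume y: "y \<in> P"
  then have "r \<otimes> g \<otimes> y = (r \<otimes> conjg y) \<otimes> g"
    using r P_closed g_closed g_mult conjg_closed by (simp add: m_assoc)
  then have "invert (r \<otimes> g \<otimes> y) = inv (r \<otimes> conjg y) \<otimes> inv g"
    using r y P_mult conjg_P invert_coset by metis
  also have "\<dots> = inv r \<otimes> inv (g \<otimes> conjg y)"
    using r y inv_mult_P conjg_P P_closed g_closed by (simp add: inv_mult_group m_assoc)
  also have "g \<otimes> conjg y = y \<otimes> g"
    using y g_mult conjg_closed conjg_conjg P_closed conjg_P by metis
  finally show ?thesis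
    using r y P_closed g_closed by (simp add: invert_P invert_coset inv_mult_group m_assoc)
next
  assume "\<exists>q\<in>P. y = q \<otimes> g"
  then obtain q where q: "q \<in> P" "y = q \<otimes> g" by blast
  have "r \<otimes> g \<otimes> y = r \<otimes> (g \<otimes> q) \<otimes> g"
    using r q P_closed g_closed by (simp add: m_assoc)
  also have "\<dots> = r \<otimes> (conjg q \<otimes> (g \<otimes> g))"
    using r q g_mult[of q] P_closed g_closed conjg_closed by (simp add: m_assoc)
  finally have "invert (r \<otimes> g \<otimes> y) = inv r \<otimes> inv (conjg q \<otimes> (g \<otimes> g))"
    using r q conjg_P g_square P_mult inv_mult_P invert_P by metis
  also have "conjg q \<otimes> (g \<otimes> g) = g \<otimes> q \<otimes> g"
    using q g_mult[of q] P_closed g_closed conjg_closed by (simp add: m_assoc)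
  finally show ?thesis
    using r q P_closed g_closed by (simp add: invert_coset inv_mult_group m_assoc)
qed

lemma invert_mult: "x \<in> carrier G \<Longrightarrow> y \<in> carrier G \<Longrightarrow> invert (x \<otimes> y) = invert x \<otimes> invert y"
  using decomp invert_mult_P invert_mult_coset by blast

lemma invert_iso: "invert \<in> iso G G"
proof (rule involution_hom_iso)
  have "invert x \<in> carrier G" if "x \<in> carrier G" for x
    using that by (simp add: invert_def conjg_closed)
  then show "invert \<in> hom G G"
    by (intro homI) (simp_all add: invert_mult)
next
  fix x assume x: "x \<in> carrier G"
  show "invert (invert x) = x"
  proof (cases "x \<in> P")
    case True then show ?thesis using P_inv P_closed by (simp add: invert_P)
  next
    case False
    then obtain r where r: "r \<in> P" "x = r \<otimes> g" using decomp[OF x] by blast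
    have "inv r \<otimes> inv g = (inv r \<otimes> inv (g \<otimes> g)) \<otimes> g"
      using r P_closed g_closed by (simp add: inv_mult_group m_assoc)
    moreover have "inv r \<otimes> inv (g \<otimes> g) \<in> P"
      using r g_square P_inv P_mult by blast
    ultimately have "invert (invert x) = (g \<otimes> g) \<otimes> r \<otimes> inv g"
      using r P_closed g_closed by (simp add: invert_coset inv_mult_group)
    also have "\<dots> = x"
      using P_comm[OF g_square r(1)] r P_closed g_closed by (simp add: m_assoc)
    finally show ?thesis .
  qed
qed

end

lemma index_two_induced_auts:
  assumes A: "group A" and B: "comm_group B" "finite (carrier B)"
    and \<pi>: "monomorphism B A \<pi>" and index: "card (rcosets\<^bsub>A\<^esub> (\<pi> ` carrier B)) = 2"
  obtains c \<iota> where "c \<in> induced_auts A B \<pi>" "\<iota> \<in> induced_auts A B \<pi>"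
    "\<And>b. b \<in> carrier B \<Longrightarrow> c (c b) = b"
    "\<And>b. b \<in> carrier B \<Longrightarrow> c b = b \<Longrightarrow> \<forall>y\<in>carrier A. y \<otimes>\<^bsub>A\<^esub> \<pi> b = \<pi> b \<otimes>\<^bsub>A\<^esub> y"
    "\<And>b. b \<in> carrier B \<Longrightarrow> \<iota> b = inv\<^bsub>B\<^esub> b"
proof -
  interpret B: comm_group B by (rule B(1))
  have hom: "\<pi> \<in> hom B A" and inj: "inj_on \<pi> (carrier B)"
    using \<pi> by (auto simp: monomorphism_def)
  interpret \<pi>: group_hom B A \<pi>
    using A hom by (simp add: group_hom_def group_hom_axioms_def B.is_group)
  let ?P = "\<pi> ` carrier B"
  obtain g where g: "g \<in> carrier A" "g \<notin> ?P" "\<And>x. x \<in> carrier A \<Longrightarrow> x \<in> ?P \<or> (\<exists>p\<in>?P. x = p \<otimes>\<^bsub>A\<^esub> g)"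
    using index_two_decomposition[OF A \<pi>.img_is_subgroup index] by blast
  have "x \<otimes>\<^bsub>A\<^esub> y = y \<otimes>\<^bsub>A\<^esub> x" if "x \<in> ?P" "y \<in> ?P" for x y
    using that by (auto simp flip: \<pi>.hom_mult simp: B.m_comm)
  then interpret abelian_index_two A ?P g
    unfolding abelian_index_two_def abelian_index_two_axioms_def
    using A \<pi>.img_is_subgroup g by blast
  have eq: "\<pi> x = \<pi> y \<longleftrightarrow> x = y" if "x \<in> carrier B" "y \<in> carrier B" for x y
    using inj that by (meson inj_on_eq_iff)
  obtain c where c: "c \<in> induced_auts A B \<pi>" "\<And>b. b \<in> carrier B \<Longrightarrow> \<pi> (c b) = conjg (\<pi> b)"
    using induced_autsI[OF A B.is_group B(2) \<pi> conjg_iso] conjg_P by blast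
  obtain \<iota> where \<iota>: "\<iota> \<in> induced_auts A B \<pi>" "\<And>b. b \<in> carrier B \<Longrightarrow> \<pi> (\<iota> b) = invert (\<pi> b)"
    using induced_autsI[OF A B.is_group B(2) \<pi> invert_iso] invert_P P_inv by force
  have c_closed: "c b \<in> carrier B" if "b \<in> carrier B" for b
    using c(1) that by (auto simp: induced_auts_def iso_def hom_def)
  have \<iota>_closed: "\<iota> b \<in> carrier B" if "b \<in> carrier B" for b
    using \<iota>(1) that by (auto simp: induced_auts_def iso_def hom_def)
  show thesis
  proof (rule that[OF c(1) \<iota>(1)])
    fix b assume b: "b \<in> carrier B"
    show "c (c b) = b"
      using b c(2) c_closed conjg_conjg eq by (metis imageI)
    show "\<iota> b = inv\<^bsub>B\<^esub> b"
      using b \<iota>(2) \<iota>_closed eq[of "\<iota> b" "inv\<^bsub>B\<^esub> b"] invert_P by (simp add: \<pi>.hom_inv)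
    assume "c b = b"
    then show "\<forall>y\<in>carrier A. y \<otimes>\<^bsub>A\<^esub> \<pi> b = \<pi> b \<otimes>\<^bsub>A\<^esub> y"
      using b c(2) conjg_fixed_central by (metis imageI)
  qed
qed

section \<open>The group \<open>C4 \<times> C2\<close>\<close>

definition C4xC2 :: "(int \<times> int) monoid" where "C4xC2 = C 4 \<times>\<times> C 2"

lemma carrier_C4xC2: "carrier C4xC2 = {0, 1, 2, 3} \<times> {0, 1}"
proof -
  have "{0..<4::int} = {0, 1, 2, 3}" "{0..<2::int} = {0, 1}"
    by code_simp+
  then show ?thesis
    by (simp add: C4xC2_def carrier_integer_mod_group)
qed

lemma group_C4xC2: "group C4xC2"
  by (simp add: C4xC2_def DirProd_group)

lemma C4xC2_facts:
  "card (carrier C4xC2) = 8"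
  "\<forall>x\<in>carrier C4xC2. \<forall>y\<in>carrier C4xC2. x \<otimes>\<^bsub>C4xC2\<^esub> y = y \<otimes>\<^bsub>C4xC2\<^esub> x"
  "\<forall>x\<in>carrier C4xC2. x \<otimes>\<^bsub>C4xC2\<^esub> x \<otimes>\<^bsub>C4xC2\<^esub> x \<otimes>\<^bsub>C4xC2\<^esub> x = \<one>\<^bsub>C4xC2\<^esub>"
  "\<forall>x\<in>carrier C4xC2. \<forall>y\<in>carrier C4xC2. x \<otimes>\<^bsub>C4xC2\<^esub> x \<noteq> \<one>\<^bsub>C4xC2\<^esub> \<longrightarrow> y \<otimes>\<^bsub>C4xC2\<^esub> y \<noteq> \<one>\<^bsub>C4xC2\<^esub>
     \<longrightarrow> x \<otimes>\<^bsub>C4xC2\<^esub> x = y \<otimes>\<^bsub>C4xC2\<^esub> y"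
  "\<exists>x\<in>carrier C4xC2. x \<otimes>\<^bsub>C4xC2\<^esub> x \<noteq> \<one>\<^bsub>C4xC2\<^esub>"
  unfolding carrier_C4xC2 by (simp_all add: C4xC2_def)

lemma C4xC2_elements:
  "\<forall>t\<in>carrier C4xC2. \<forall>z\<in>carrier C4xC2. \<forall>x\<in>carrier C4xC2.
     t \<otimes>\<^bsub>C4xC2\<^esub> t \<noteq> \<one>\<^bsub>C4xC2\<^esub> \<longrightarrow> z \<otimes>\<^bsub>C4xC2\<^esub> z = \<one>\<^bsub>C4xC2\<^esub> \<longrightarrow> z \<noteq> \<one>\<^bsub>C4xC2\<^esub> \<longrightarrow> z \<noteq> t \<otimes>\<^bsub>C4xC2\<^esub> t \<longrightarrow>
     (x \<otimes>\<^bsub>C4xC2\<^esub> x \<noteq> \<one>\<^bsub>C4xC2\<^esub> \<longrightarrow>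
        x \<in> {t, t \<otimes>\<^bsub>C4xC2\<^esub> t \<otimes>\<^bsub>C4xC2\<^esub> t, t \<otimes>\<^bsub>C4xC2\<^esub> z, t \<otimes>\<^bsub>C4xC2\<^esub> t \<otimes>\<^bsub>C4xC2\<^esub> t \<otimes>\<^bsub>C4xC2\<^esub> z}) \<and>
     (x \<otimes>\<^bsub>C4xC2\<^esub> x = \<one>\<^bsub>C4xC2\<^esub> \<longrightarrow>
        x \<in> {\<one>\<^bsub>C4xC2\<^esub>, t \<otimes>\<^bsub>C4xC2\<^esub> t, z, t \<otimes>\<^bsub>C4xC2\<^esub> t \<otimes>\<^bsub>C4xC2\<^esub> z})"
  unfolding carrier_C4xC2 unfolding C4xC2_def by code_simp

locale C4xC2_group = group B for B (structure) +
  assumes iso_C4xC2: "B \<cong> C4xC2"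
begin

text \<open>Facts about the concrete group \<open>C4xC2\<close> are transferred to \<open>B\<close> along a fixed isomorphism.\<close>
definition coord where "coord = (SOME h. h \<in> iso B C4xC2)"

lemma coord_iso: "coord \<in> iso B C4xC2"
  using iso_C4xC2 unfolding coord_def is_iso_def by (rule someI_ex[OF ex_in_conv[THEN iffD2]])

lemma coord_hom: "coord \<in> hom B C4xC2"
  and coord_inj: "inj_on coord (carrier B)"
  and coord_surj: "coord ` carrier B = carrier C4xC2"
  using coord_iso by (simp_all add: iso_iff)

lemma coord_closed: "x \<in> carrier B \<Longrightarrow> coord x \<in> carrier C4xC2"
  by (rule hom_in_carrier[OF coord_hom])

lemma coord_mult: "x \<in> carrier B \<Longrightarrow> y \<in> carrier B \<Longrightarrow> coord (x \<otimes> y) = coord x \<otimes>\<^bsub>C4xC2\<^esub> coord y"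
  by (rule hom_mult[OF coord_hom])

lemma coord_eq_iff: "x \<in> carrier B \<Longrightarrow> y \<in> carrier B \<Longrightarrow> coord x = coord y \<longleftrightarrow> x = y"
  by (rule inj_on_eq_iff[OF coord_inj])

lemma coord_one: "coord \<one> = \<one>\<^bsub>C4xC2\<^esub>"
  by (rule hom_one[OF coord_hom is_group group_C4xC2])

lemma m_comm: "x \<in> carrier B \<Longrightarrow> y \<in> carrier B \<Longrightarrow> x \<otimes> y = y \<otimes> x"
  using C4xC2_facts(2) coord_closed by (simp add: coord_mult flip: coord_eq_iff)

sublocale comm_group B
  by (rule group_comm_groupI) (rule m_comm)

lemma card_carrier: "card (carrier B) = 8"
  using iso_same_card[OF iso_C4xC2] C4xC2_facts(1) by simp

lemma finite_carrier: "finite (carrier B)"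
  using card_carrier by (metis card.infinite zero_neq_numeral)

lemma pow4: "x \<in> carrier B \<Longrightarrow> x \<otimes> x \<otimes> x \<otimes> x = \<one>"
  using C4xC2_facts(3) coord_closed by (simp add: coord_mult coord_one flip: coord_eq_iff)

lemma square_unique: "x \<in> carrier B \<Longrightarrow> y \<in> carrier B \<Longrightarrow> x \<otimes> x \<noteq> \<one> \<Longrightarrow> y \<otimes> y \<noteq> \<one> \<Longrightarrow> x \<otimes> x = y \<otimes> y"
  using C4xC2_facts(4) coord_closed by (simp add: coord_mult coord_one flip: coord_eq_iff)

lemma exists_order_four: "\<exists>t\<in>carrier B. t \<otimes> t \<noteq> \<one>"
proof -
  obtain t where "t \<in> carrier B" "coord t \<otimes>\<^bsub>C4xC2\<^esub> coord t \<noteq> \<one>\<^bsub>C4xC2\<^esub>"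
    using C4xC2_facts(5) coord_surj by (metis imageE)
  then show ?thesis by (metis coord_mult coord_one)
qed

text \<open>As \<open>B\<close> has exponent four, \<open>order_four t\<close> says that \<open>t\<close> has order exactly four.\<close>
definition order_four :: "'a \<Rightarrow> bool"
  where "order_four t \<longleftrightarrow> t \<in> carrier B \<and> t \<otimes> t \<noteq> \<one>"

definition nonsquare_involution :: "'a \<Rightarrow> bool"
  where "nonsquare_involution z \<longleftrightarrow> z \<in> carrier B \<and> z \<otimes> z = \<one> \<and> z \<noteq> \<one> \<and> (\<forall>t\<in>carrier B. z \<noteq> t \<otimes> t)"

lemma elements:
  assumes "order_four t" "nonsquare_involution z" "x \<in> carrier B"
  shows elements_order_four: "x \<otimes> x \<noteq> \<one> \<Longrightarrow> x \<in> {t, t \<otimes> t \<otimes> t, t \<otimes> z, t \<otimes> t \<otimes> t \<otimes> z}"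
    and elements_involution: "x \<otimes> x = \<one> \<Longrightarrow> x \<in> {\<one>, t \<otimes> t, z, t \<otimes> t \<otimes> z}"
proof -
  have t: "t \<in> carrier B" "t \<otimes> t \<noteq> \<one>" and z: "z \<in> carrier B" "z \<otimes> z = \<one>" "z \<noteq> \<one>" "z \<noteq> t \<otimes> t"
    using assms(1,2) by (auto simp: order_four_def nonsquare_involution_def)
  note C4xC2_elements[rule_format, OF coord_closed[OF t(1)] coord_closed[OF z(1)] coord_closed[OF assms(3)]]
  then have "(x \<otimes> x \<noteq> \<one> \<longrightarrow> x \<in> {t, t \<otimes> t \<otimes> t, t \<otimes> z, t \<otimes> t \<otimes> t \<otimes> z}) \<and>
      (x \<otimes> x = \<one> \<longrightarrow> x \<in> {\<one>, t \<otimes> t, z, t \<otimes> t \<otimes> z})"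
    using t z assms(3) by (simp flip: coord_mult coord_one coord_eq_iff)
  then show "x \<otimes> x \<noteq> \<one> \<Longrightarrow> x \<in> {t, t \<otimes> t \<otimes> t, t \<otimes> z, t \<otimes> t \<otimes> t \<otimes> z}"
    and "x \<otimes> x = \<one> \<Longrightarrow> x \<in> {\<one>, t \<otimes> t, z, t \<otimes> t \<otimes> z}" by blast+
qed

lemma pow4_left: "x \<in> carrier B \<Longrightarrow> y \<in> carrier B \<Longrightarrow> x \<otimes> (x \<otimes> (x \<otimes> (x \<otimes> y))) = y"
  using pow4 by (simp add: m_assoc[symmetric])

lemma pow4_right: "x \<in> carrier B \<Longrightarrow> x \<otimes> (x \<otimes> (x \<otimes> x)) = \<one>"
  using pow4 by (simp add: m_assoc[symmetric])

lemma inv_eq_cube: "x \<in> carrier B \<Longrightarrow> inv x = x \<otimes> x \<otimes> x"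
  using pow4 by (simp add: inv_equality)

lemma nonsquare_involutionD:
  assumes "order_four t" "nonsquare_involution z"
  shows "t \<in> carrier B" "t \<otimes> t \<noteq> \<one>" "z \<in> carrier B" "z \<otimes> z = \<one>" "z \<noteq> \<one>" "z \<noteq> t \<otimes> t"
    and "\<And>x. x \<in> carrier B \<Longrightarrow> z \<otimes> (z \<otimes> x) = x" "inv z = z"
  using assms by (auto simp: order_four_def nonsquare_involution_def m_assoc[symmetric] inv_equality)

lemma hom_agree_on_generators:
  assumes "group H" "f \<in> hom B H" "f' \<in> hom B H" "order_four t" "nonsquare_involution z"
    and "f t = f' t" "f z = f' z" "x \<in> carrier B"
  shows "f x = f' x"
proof -
  note tz = nonsquare_involutionD[OF assms(4,5)]
  have "x \<in> {\<one>, t, t \<otimes> t, t \<otimes> t \<otimes> t, z, t \<otimes> z, t \<otimes> t \<otimes> z, t \<otimes> t \<otimes> t \<otimes> z}"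
    using elements[OF assms(4,5,8)] by (cases "x \<otimes> x = \<one>") auto
  then show ?thesis
    using tz(1,3) assms(6,7) hom_one[OF assms(2) is_group assms(1)] hom_one[OF assms(3) is_group assms(1)]
    by (auto simp: hom_mult[OF assms(2)] hom_mult[OF assms(3)])
qed

lemma aut_order_four:
  assumes "\<theta> \<in> iso B B" "order_four t"
  shows "order_four (\<theta> t)" "\<theta> (t \<otimes> t) = t \<otimes> t"
proof -
  have \<theta>: "\<theta> \<in> hom B B" "inj_on \<theta> (carrier B)" using assms(1) by (simp_all add: iso_iff)
  have t: "t \<in> carrier B" "t \<otimes> t \<noteq> \<one>" using assms(2) by (simp_all add: order_four_def)
  have "\<theta> (t \<otimes> t) \<noteq> \<theta> \<one>"
    using t \<theta>(2) by (meson inj_on_eq_iff m_closed one_closed)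
  then show "order_four (\<theta> t)"
    using t hom_one[OF \<theta>(1) is_group is_group] by (simp add: order_four_def hom_mult[OF \<theta>(1)] hom_in_carrier[OF \<theta>(1)])
  then show "\<theta> (t \<otimes> t) = t \<otimes> t"
    using t square_unique by (simp add: order_four_def hom_mult[OF \<theta>(1)])
qed

lemma aut_nonsquare_involution:
  assumes "\<theta> \<in> iso B B" "order_four t" "nonsquare_involution z"
  shows "\<theta> z \<in> {z, t \<otimes> t \<otimes> z}"
proof -
  note tz = nonsquare_involutionD[OF assms(2,3)]
  have \<theta>: "\<theta> \<in> hom B B" "inj_on \<theta> (carrier B)" using assms(1) by (simp_all add: iso_iff)
  have \<theta>1: "\<theta> \<one> = \<one>" by (rule hom_one[OF \<theta>(1) is_group is_group])
  have "\<theta> z \<noteq> \<theta> \<one>" "\<theta> z \<noteq> \<theta> (t \<otimes> t)"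
    using tz \<theta>(2) by (meson inj_on_eq_iff m_closed one_closed)+
  moreover have "\<theta> z \<otimes> \<theta> z = \<one>"
    using tz \<theta>1 by (simp flip: hom_mult[OF \<theta>(1)])
  ultimately show ?thesis
    using elements_involution[OF assms(2,3) hom_in_carrier[OF \<theta>(1) tz(3)]] \<theta>1 aut_order_four[OF assms(1,2)]
    by auto
qed

lemma aut_order_four_cases:
  assumes "\<theta> \<in> iso B B" "order_four t" "nonsquare_involution z"
  shows "\<theta> t \<in> {t, t \<otimes> t \<otimes> t, t \<otimes> z, t \<otimes> t \<otimes> t \<otimes> z}"
  using aut_order_four[OF assms(1,2)] elements_order_four[OF assms(2,3)] by (simp add: order_four_def)

lemma aut_twisted_order_four:
  assumes "\<theta> \<in> iso B B" "order_four t" "nonsquare_involution z"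
  shows "\<theta> t \<in> {t, t \<otimes> t \<otimes> t} \<or> \<theta> (t \<otimes> z) \<in> {t, t \<otimes> t \<otimes> t}"
proof -
  note tz = nonsquare_involutionD[OF assms(2,3)]
  have "\<theta> (t \<otimes> z) = \<theta> t \<otimes> \<theta> z"
    using assms(1) tz by (simp add: iso_iff hom_mult)
  then show ?thesis
    using aut_order_four_cases[OF assms] aut_nonsquare_involution[OF assms] tz
    by (auto simp: m_ac pow4_left pow4_right)
qed

lemma involutive_aut_fixes_order_four:
  assumes c: "c \<in> iso B B" "\<And>b. b \<in> carrier B \<Longrightarrow> c (c b) = b"
    and z: "nonsquare_involution z" "c z \<noteq> z"
  obtains t where "order_four t" "c t = t" "c z = t \<otimes> t \<otimes> z"
proof -
  obtain t0 where t0: "order_four t0"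
    using exists_order_four by (auto simp: order_four_def)
  note tz = nonsquare_involutionD[OF t0 z(1)]
  have hom: "c \<in> hom B B" using c(1) by (simp add: iso_iff)
  have cz: "c z = t0 \<otimes> t0 \<otimes> z"
    using aut_nonsquare_involution[OF c(1) t0 z(1)] z(2) by simp
  have "c t0 = t0 \<or> c t0 = t0 \<otimes> t0 \<otimes> t0"
  proof (rule ccontr)
    assume "\<not> (c t0 = t0 \<or> c t0 = t0 \<otimes> t0 \<otimes> t0)"
    then have "c t0 \<in> {t0 \<otimes> z, t0 \<otimes> t0 \<otimes> t0 \<otimes> z}"
      using aut_order_four_cases[OF c(1) t0 z(1)] by simp
    then have "c (c t0) = t0 \<otimes> t0 \<otimes> t0"
      using cz tz by (auto simp: hom_mult[OF hom] m_ac pow4_left pow4_right)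
    then show False
      using c(2) tz by (simp add: m_assoc)
  qed
  then show thesis
  proof
    assume "c t0 = t0"
    then show thesis using that t0 cz by blast
  next
    assume ct0: "c t0 = t0 \<otimes> t0 \<otimes> t0"
    show thesis
    proof (rule that[of "t0 \<otimes> z"])
      show "order_four (t0 \<otimes> z)"
        using tz by (simp add: order_four_def m_ac)
      show "c (t0 \<otimes> z) = t0 \<otimes> z" "c z = t0 \<otimes> z \<otimes> (t0 \<otimes> z) \<otimes> z"
        using ct0 cz tz by (simp_all add: hom_mult[OF hom] m_ac pow4_left)
    qed
  qed
qed

lemma aut_stabilising_cyclic_factor:
  assumes c: "c \<in> iso B B" "c t = t" "c z = t \<otimes> t \<otimes> z"
    and tz: "order_four t" "nonsquare_involution z"
    and \<theta>: "\<theta> \<in> iso B B" "\<theta> t \<in> {t, t \<otimes> t \<otimes> t}"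
  shows "\<exists>\<psi>\<in>{\<lambda>b. b, c, \<lambda>b. inv b, \<lambda>b. inv (c b)}. \<forall>x\<in>carrier B. \<theta> x = \<psi> x"
proof -
  note tz' = nonsquare_involutionD[OF tz]
  have c_hom: "c \<in> hom B B" and \<theta>_hom: "\<theta> \<in> hom B B"
    using c(1) \<theta>(1) by (simp_all add: iso_iff)
  have id_hom: "(\<lambda>b. b) \<in> hom B B" and inv_hom: "(\<lambda>b. inv b) \<in> hom B B"
    by (rule homI; simp add: inv_mult)+
  have agree: "\<forall>x\<in>carrier B. \<theta> x = \<psi> x" if "\<psi> \<in> hom B B" "\<theta> t = \<psi> t" "\<theta> z = \<psi> z" for \<psi>
    using hom_agree_on_generators[OF is_group \<theta>_hom that(1) tz] that(2,3) by blast
  have inv_t: "inv t = t \<otimes> t \<otimes> t" and inv_ttz: "inv (t \<otimes> t \<otimes> z) = t \<otimes> t \<otimes> z"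
    using tz' by (simp add: inv_eq_cube, intro inv_equality, simp_all add: m_ac pow4_left pow4_right)
  have inv_c: "(\<lambda>b. inv b) \<circ> c = (\<lambda>b. inv (c b))" by auto
  consider "\<theta> t = t" "\<theta> z = z" | "\<theta> t = t" "\<theta> z = t \<otimes> t \<otimes> z"
    | "\<theta> t = t \<otimes> t \<otimes> t" "\<theta> z = z" | "\<theta> t = t \<otimes> t \<otimes> t" "\<theta> z = t \<otimes> t \<otimes> z"
    using \<theta>(2) aut_nonsquare_involution[OF \<theta>(1) tz] by blast
  then show ?thesis
  proof cases
    case 1 then show ?thesis using agree[OF id_hom] by auto
  next
    case 2 then show ?thesis using agree[OF c_hom] c by auto
  next
    case 3 then show ?thesis using agree[OF inv_hom] inv_t tz'(8) by auto
  next
    case 4 then show ?thesis using agree[OF Group.hom_compose[OF c_hom inv_hom]] c inv_t inv_ttz inv_c by auto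
  qed
qed

end

lemma index_two_C4xC2_induced_auts:
  assumes A: "group A" and B: "C4xC2_group B" and \<pi>: "monomorphism B A \<pi>"
    and index: "card (rcosets\<^bsub>A\<^esub> (\<pi> ` carrier B)) = 2"
    and z: "C4xC2_group.nonsquare_involution B z" "\<exists>y\<in>carrier A. y \<otimes>\<^bsub>A\<^esub> \<pi> z \<noteq> \<pi> z \<otimes>\<^bsub>A\<^esub> y"
  obtains t where "C4xC2_group.order_four B t"
    "\<And>\<theta>. \<theta> \<in> iso B B \<Longrightarrow> \<theta> t \<in> {t, t \<otimes>\<^bsub>B\<^esub> t \<otimes>\<^bsub>B\<^esub> t} \<Longrightarrow> \<theta> \<in> induced_auts A B \<pi>"
proof -
  interpret B: C4xC2_group B by (rule B)
  obtain c \<iota> where c: "c \<in> induced_auts A B \<pi>" "\<And>b. b \<in> carrier B \<Longrightarrow> c (c b) = b"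
      "\<And>b. b \<in> carrier B \<Longrightarrow> c b = b \<Longrightarrow> \<forall>y\<in>carrier A. y \<otimes>\<^bsub>A\<^esub> \<pi> b = \<pi> b \<otimes>\<^bsub>A\<^esub> y"
    and \<iota>: "\<iota> \<in> induced_auts A B \<pi>" "\<And>b. b \<in> carrier B \<Longrightarrow> \<iota> b = inv\<^bsub>B\<^esub> b"
    using index_two_induced_auts[OF A B.comm_group_axioms B.finite_carrier \<pi> index] by metis
  have c_iso: "c \<in> iso B B" using c(1) by (simp add: induced_auts_def)
  have "c z \<noteq> z"
    using c(3) z by (auto simp: B.nonsquare_involution_def)
  then obtain t where t: "B.order_four t" "c t = t" "c z = t \<otimes>\<^bsub>B\<^esub> t \<otimes>\<^bsub>B\<^esub> z"
    using B.involutive_aut_fixes_order_four[OF c_iso c(2) z(1)] by blast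
  have c_closed: "c b \<in> carrier B" if "b \<in> carrier B" for b
    using c_iso that by (auto simp: iso_def hom_def)
  have "\<theta> \<in> induced_auts A B \<pi>" if \<theta>: "\<theta> \<in> iso B B" "\<theta> t \<in> {t, t \<otimes>\<^bsub>B\<^esub> t \<otimes>\<^bsub>B\<^esub> t}" for \<theta>
  proof -
    obtain \<psi> where "\<psi> \<in> {\<lambda>b. b, c, \<lambda>b. inv\<^bsub>B\<^esub> b, \<lambda>b. inv\<^bsub>B\<^esub> (c b)}" "\<forall>x\<in>carrier B. \<theta> x = \<psi> x"
      using B.aut_stabilising_cyclic_factor[OF c_iso t(2,3) t(1) z(1) \<theta>] by blast
    moreover have "\<iota> \<circ> c \<in> induced_auts A B \<pi>"
      using induced_auts_comp[OF \<iota>(1) c(1)] .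
    ultimately show ?thesis
      using induced_auts_cong[OF _ \<theta>(1)] id_in_induced_auts c(1) \<iota> c_closed by fastforce
  qed
  then show thesis using that t(1) by blast
qed

lemma C4xC2_aut_factorisation:
  assumes B: "C4xC2_group B" and tz: "C4xC2_group.order_four B t" "C4xC2_group.nonsquare_involution B z"
    and r: "r \<in> induced_auts A1 B \<pi>1" "r t = t \<otimes>\<^bsub>B\<^esub> z"
    and A2_auts: "\<And>\<psi>. \<psi> \<in> iso B B \<Longrightarrow> \<psi> t \<in> {t, t \<otimes>\<^bsub>B\<^esub> t \<otimes>\<^bsub>B\<^esub> t} \<Longrightarrow> \<psi> \<in> induced_auts A2 B \<pi>2"
    and \<theta>: "\<theta> \<in> iso B B"
  shows "\<exists>r\<in>induced_auts A1 B \<pi>1. \<theta> \<circ> r \<in> induced_auts A2 B \<pi>2"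
  using C4xC2_group.aut_twisted_order_four[OF B \<theta> tz]
proof
  assume "\<theta> t \<in> {t, t \<otimes>\<^bsub>B\<^esub> t \<otimes>\<^bsub>B\<^esub> t}"
  then have "\<theta> \<circ> (\<lambda>b. b) \<in> induced_auts A2 B \<pi>2"
    using A2_auts[OF \<theta>] by (simp add: o_def)
  then show ?thesis using id_in_induced_auts by blast
next
  assume "\<theta> (t \<otimes>\<^bsub>B\<^esub> z) \<in> {t, t \<otimes>\<^bsub>B\<^esub> t \<otimes>\<^bsub>B\<^esub> t}"
  moreover have "\<theta> \<circ> r \<in> iso B B"
    using r(1) \<theta> iso_set_trans by (auto simp: induced_auts_def)
  ultimately have "\<theta> \<circ> r \<in> induced_auts A2 B \<pi>2"
    using A2_auts r(2) by simp
  then show ?thesis using r(1) by blast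
qed

section \<open>The group \<open>Frob(20) \<times> C2\<close>\<close>

lemma carrier_Frob20: "carrier Frob20 = {1, 2, 3, 4} \<times> {0, 1, 2, 3, 4}"
proof -
  have "{1..4::int} = {1, 2, 3, 4}" "{0..4::int} = {0, 1, 2, 3, 4}"
    by code_simp+
  then show ?thesis by (simp add: Frob20_def)
qed

lemma mult_Frob20: "x \<otimes>\<^bsub>Frob20\<^esub> y = ((fst x * fst y) mod 5, (fst x * snd y + snd x) mod 5)"
  and one_Frob20: "\<one>\<^bsub>Frob20\<^esub> = (1, 0)"
  by (simp_all add: Frob20_def)

lemma group_Frob20: "group Frob20"
proof (rule groupI)
  have "\<forall>x\<in>carrier Frob20. \<forall>y\<in>carrier Frob20. x \<otimes>\<^bsub>Frob20\<^esub> y \<in> carrier Frob20"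
    unfolding carrier_Frob20 mult_Frob20 by code_simp
  then show "\<And>x y. x \<in> carrier Frob20 \<Longrightarrow> y \<in> carrier Frob20 \<Longrightarrow> x \<otimes>\<^bsub>Frob20\<^esub> y \<in> carrier Frob20"
    by blast
  show "\<one>\<^bsub>Frob20\<^esub> \<in> carrier Frob20"
    "\<And>x. x \<in> carrier Frob20 \<Longrightarrow> \<one>\<^bsub>Frob20\<^esub> \<otimes>\<^bsub>Frob20\<^esub> x = x"
    by (auto simp: Frob20_def)
  have "\<forall>x\<in>carrier Frob20. \<forall>y\<in>carrier Frob20. \<forall>z\<in>carrier Frob20.
      x \<otimes>\<^bsub>Frob20\<^esub> y \<otimes>\<^bsub>Frob20\<^esub> z = x \<otimes>\<^bsub>Frob20\<^esub> (y \<otimes>\<^bsub>Frob20\<^esub> z)"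
    unfolding carrier_Frob20 mult_Frob20 by code_simp
  then show "\<And>x y z. x \<in> carrier Frob20 \<Longrightarrow> y \<in> carrier Frob20 \<Longrightarrow> z \<in> carrier Frob20 \<Longrightarrow>
      x \<otimes>\<^bsub>Frob20\<^esub> y \<otimes>\<^bsub>Frob20\<^esub> z = x \<otimes>\<^bsub>Frob20\<^esub> (y \<otimes>\<^bsub>Frob20\<^esub> z)" by blast
  have "\<forall>x\<in>carrier Frob20. \<exists>y\<in>carrier Frob20. y \<otimes>\<^bsub>Frob20\<^esub> x = \<one>\<^bsub>Frob20\<^esub>"
    unfolding carrier_Frob20 mult_Frob20 one_Frob20 by code_simp
  then show "\<And>x. x \<in> carrier Frob20 \<Longrightarrow> \<exists>y\<in>carrier Frob20. y \<otimes>\<^bsub>Frob20\<^esub> x = \<one>\<^bsub>Frob20\<^esub>" by blast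
qed

definition Frob20xC2 :: "((int \<times> int) \<times> int) monoid" where "Frob20xC2 = Frob20 \<times>\<times> C 2"

lemma group_Frob20xC2: "group Frob20xC2"
  by (simp add: Frob20xC2_def DirProd_group group_Frob20)

lemma carrier_Frob20xC2: "carrier Frob20xC2 = carrier Frob20 \<times> {0, 1}"
proof -
  have "{0..<2::int} = {0, 1}" by code_simp
  then show ?thesis by (simp add: Frob20xC2_def carrier_integer_mod_group)
qed

lemma mult_Frob20xC2: "x \<otimes>\<^bsub>Frob20xC2\<^esub> y = (fst x \<otimes>\<^bsub>Frob20\<^esub> fst y, (snd x + snd y) mod 2)"
  and one_Frob20xC2: "\<one>\<^bsub>Frob20xC2\<^esub> = ((1, 0), 0)"
  by (simp_all add: Frob20xC2_def mult_DirProd' one_Frob20)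

definition c2_generator :: "(int \<times> int) \<times> int" where "c2_generator = ((1, 0), 1)"

text \<open>An element of \<open>Frob20\<close> has multiplier in \<open>{2, 3}\<close> iff the multiplier is a non-square
  mod 5; this is the sign character \<open>Frob20 \<rightarrow> C2\<close>, by which \<open>twist\<close> shifts the \<open>C2\<close> coordinate.\<close>
definition twist :: "(int \<times> int) \<times> int \<Rightarrow> (int \<times> int) \<times> int"
  where "twist x = (if fst (fst x) \<in> {2, 3} then x \<otimes>\<^bsub>Frob20xC2\<^esub> c2_generator else x)"

lemma twist_mult:
  "\<forall>x\<in>carrier Frob20xC2. \<forall>y\<in>carrier Frob20xC2. twist (x \<otimes>\<^bsub>Frob20xC2\<^esub> y) = twist x \<otimes>\<^bsub>Frob20xC2\<^esub> twist y"
  unfolding carrier_Frob20xC2 carrier_Frob20 twist_def mult_Frob20xC2 mult_Frob20 c2_generator_def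
  by code_simp

lemma twist_closed_involutive:
  "\<forall>x\<in>carrier Frob20xC2. twist x \<in> carrier Frob20xC2 \<and> twist (twist x) = x"
  unfolding carrier_Frob20xC2 carrier_Frob20 twist_def mult_Frob20xC2 mult_Frob20 c2_generator_def
  by code_simp

lemma c2_generator:
  "c2_generator \<in> carrier Frob20xC2"
  "c2_generator \<otimes>\<^bsub>Frob20xC2\<^esub> c2_generator = \<one>\<^bsub>Frob20xC2\<^esub>"
  "c2_generator \<noteq> \<one>\<^bsub>Frob20xC2\<^esub>"
  "\<forall>x\<in>carrier Frob20xC2. x \<otimes>\<^bsub>Frob20xC2\<^esub> c2_generator = c2_generator \<otimes>\<^bsub>Frob20xC2\<^esub> x"
  "\<forall>x\<in>carrier Frob20xC2. x \<otimes>\<^bsub>Frob20xC2\<^esub> x \<noteq> c2_generator"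
  unfolding carrier_Frob20xC2 carrier_Frob20 mult_Frob20xC2 mult_Frob20 c2_generator_def one_Frob20xC2
  by code_simp+

lemma Frob20xC2_order_four:
  "\<forall>x\<in>carrier Frob20xC2.
     x \<otimes>\<^bsub>Frob20xC2\<^esub> x \<noteq> \<one>\<^bsub>Frob20xC2\<^esub> \<longrightarrow> x \<otimes>\<^bsub>Frob20xC2\<^esub> x \<otimes>\<^bsub>Frob20xC2\<^esub> x \<otimes>\<^bsub>Frob20xC2\<^esub> x = \<one>\<^bsub>Frob20xC2\<^esub> \<longrightarrow>
     twist x = x \<otimes>\<^bsub>Frob20xC2\<^esub> c2_generator \<and>
     card {y \<in> carrier Frob20xC2. x \<otimes>\<^bsub>Frob20xC2\<^esub> y = y \<otimes>\<^bsub>Frob20xC2\<^esub> x} = 8"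
  unfolding carrier_Frob20xC2 carrier_Frob20 twist_def mult_Frob20xC2 mult_Frob20 c2_generator_def
    one_Frob20xC2 Set.filter_eq[symmetric]
  by code_simp

lemma twist_iso: "twist \<in> iso Frob20xC2 Frob20xC2"
proof (rule involution_hom_iso)
  show "twist \<in> hom Frob20xC2 Frob20xC2"
    using twist_mult twist_closed_involutive by (auto intro: homI)
qed (use twist_closed_involutive in blast)

locale C4xC2_in_Frob20xC2 = A: group A + B: C4xC2_group B
  for A :: "('a, 'm) monoid_scheme" and B :: "('b, 'n) monoid_scheme" +
  fixes \<pi> f
  assumes mono: "monomorphism B A \<pi>" and f_iso: "f \<in> iso A Frob20xC2"
begin

definition F where "F = f \<circ> \<pi>"

lemma F_hom: "F \<in> hom B Frob20xC2" and F_inj: "inj_on F (carrier B)"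
  using monomorphism_comp_iso[OF mono f_iso] by (simp_all add: F_def monomorphism_def)

lemma F_closed: "x \<in> carrier B \<Longrightarrow> F x \<in> carrier Frob20xC2"
  and F_mult: "x \<in> carrier B \<Longrightarrow> y \<in> carrier B \<Longrightarrow> F (x \<otimes>\<^bsub>B\<^esub> y) = F x \<otimes>\<^bsub>Frob20xC2\<^esub> F y"
  and F_eq_iff: "x \<in> carrier B \<Longrightarrow> y \<in> carrier B \<Longrightarrow> F x = F y \<longleftrightarrow> x = y"
  and F_one: "F \<one>\<^bsub>B\<^esub> = \<one>\<^bsub>Frob20xC2\<^esub>"
  using hom_in_carrier[OF F_hom] hom_mult[OF F_hom] inj_on_eq_iff[OF F_inj]
    hom_one[OF F_hom B.is_group group_Frob20xC2] by auto

lemma F_order_four: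
  assumes "B.order_four t"
  shows "twist (F t) = F t \<otimes>\<^bsub>Frob20xC2\<^esub> c2_generator"
    and "card {y \<in> carrier Frob20xC2. F t \<otimes>\<^bsub>Frob20xC2\<^esub> y = y \<otimes>\<^bsub>Frob20xC2\<^esub> F t} = 8"
proof -
  have t: "t \<in> carrier B" "t \<otimes>\<^bsub>B\<^esub> t \<noteq> \<one>\<^bsub>B\<^esub>"
    using assms by (simp_all add: B.order_four_def)
  then have "F t \<otimes>\<^bsub>Frob20xC2\<^esub> F t \<noteq> \<one>\<^bsub>Frob20xC2\<^esub>"
    "F t \<otimes>\<^bsub>Frob20xC2\<^esub> F t \<otimes>\<^bsub>Frob20xC2\<^esub> F t \<otimes>\<^bsub>Frob20xC2\<^esub> F t = \<one>\<^bsub>Frob20xC2\<^esub>"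
    using B.pow4 by (simp_all add: F_one flip: F_mult F_eq_iff)
  then show "twist (F t) = F t \<otimes>\<^bsub>Frob20xC2\<^esub> c2_generator"
    and "card {y \<in> carrier Frob20xC2. F t \<otimes>\<^bsub>Frob20xC2\<^esub> y = y \<otimes>\<^bsub>Frob20xC2\<^esub> F t} = 8"
    using Frob20xC2_order_four F_closed[OF t(1)] by blast+
qed

text \<open>The image of \<open>B\<close> is the centraliser of one of its elements of order four, which
  contains the central involution of \<open>Frob20xC2\<close>.\<close>
lemma c2_generator_in_image: "\<exists>z\<in>carrier B. F z = c2_generator"
proof -
  obtain t where t: "B.order_four t"
    using B.exists_order_four by (auto simp: B.order_four_def)
  then have t_closed: "t \<in> carrier B" by (simp add: B.order_four_def)
  define Z where "Z = {y \<in> carrier Frob20xC2. F t \<otimes>\<^bsub>Frob20xC2\<^esub> y = y \<otimes>\<^bsub>Frob20xC2\<^esub> F t}"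
  have "F ` carrier B \<subseteq> Z"
    using t_closed F_closed by (auto simp: Z_def B.m_comm simp flip: F_mult)
  moreover have card_Z: "card Z = 8"
    using F_order_four(2)[OF t] by (simp add: Z_def)
  moreover have "card (F ` carrier B) = 8"
    using card_image[OF F_inj] B.card_carrier by simp
  moreover have "finite Z"
    using card_Z by (metis card.infinite zero_neq_numeral)
  ultimately have "F ` carrier B = Z"
    by (simp add: card_subset_eq)
  moreover have "c2_generator \<in> Z"
    using c2_generator(1,4) F_closed[OF t_closed] by (simp add: Z_def)
  ultimately show ?thesis by (metis imageE)
qed

definition twist_A where "twist_A = inv_into (carrier A) f \<circ> twist \<circ> f"

lemma twist_A_iso: "twist_A \<in> iso A A"
  unfolding twist_A_def using f_iso twist_iso A.iso_set_sym[OF f_iso]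
  by (metis iso_set_trans comp_assoc)

lemma twist_A_image:
  assumes "b \<in> carrier B" "b' \<in> carrier B" "twist (F b) = F b'"
  shows "twist_A (\<pi> b) = \<pi> b'"
proof -
  have "\<pi> b' \<in> carrier A" "inj_on f (carrier A)"
    using assms(2) mono f_iso by (auto simp: monomorphism_def iso_def bij_betw_def hom_def)
  then show ?thesis
    using assms(3) by (simp add: twist_A_def F_def inv_into_f_f)
qed

lemma c2_generator_preimage:
  assumes "z \<in> carrier B" "F z = c2_generator"
  shows "B.nonsquare_involution z" "\<forall>y\<in>carrier A. y \<otimes>\<^bsub>A\<^esub> \<pi> z = \<pi> z \<otimes>\<^bsub>A\<^esub> y"
proof -
  have "F (z \<otimes>\<^bsub>B\<^esub> z) = F \<one>\<^bsub>B\<^esub>" "F z \<noteq> F \<one>\<^bsub>B\<^esub>"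
    "\<And>t. t \<in> carrier B \<Longrightarrow> F z \<noteq> F (t \<otimes>\<^bsub>B\<^esub> t)"
    using assms c2_generator(2,3,5) F_closed by (simp_all add: F_mult F_one) metis
  then show "B.nonsquare_involution z"
    using assms(1) by (simp add: B.nonsquare_involution_def F_eq_iff)
  have f: "f \<in> hom A Frob20xC2" "inj_on f (carrier A)" and "\<pi> z \<in> carrier A"
    using assms(1) mono f_iso by (auto simp: monomorphism_def iso_def bij_betw_def hom_def)
  moreover have "f y \<otimes>\<^bsub>Frob20xC2\<^esub> f (\<pi> z) = f (\<pi> z) \<otimes>\<^bsub>Frob20xC2\<^esub> f y" if "y \<in> carrier A" for y
    using assms(2) c2_generator(4) hom_in_carrier[OF f(1) that] by (simp add: F_def)
  ultimately show "\<forall>y\<in>carrier A. y \<otimes>\<^bsub>A\<^esub> \<pi> z = \<pi> z \<otimes>\<^bsub>A\<^esub> y"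
    by (simp add: inj_on_eq_iff flip: hom_mult)
qed

lemma induced_twist:
  obtains z r where "B.nonsquare_involution z" "\<forall>y\<in>carrier A. y \<otimes>\<^bsub>A\<^esub> \<pi> z = \<pi> z \<otimes>\<^bsub>A\<^esub> y"
    "r \<in> induced_auts A B \<pi>" "\<And>t. B.order_four t \<Longrightarrow> r t = t \<otimes>\<^bsub>B\<^esub> z"
proof -
  obtain z where z: "z \<in> carrier B" "F z = c2_generator"
    using c2_generator_in_image by blast
  have twist_B: "twist_A (\<pi> b) \<in> \<pi> ` carrier B" if "b \<in> carrier B" for b
  proof (cases "twist (F b) = F b")
    case True then show ?thesis using twist_A_image that by blast
  next
    case False
    then have "twist (F b) = F (b \<otimes>\<^bsub>B\<^esub> z)"
      using z by (simp add: twist_def F_mult that split: if_splits)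
    then show ?thesis using twist_A_image that z(1) by blast
  qed
  obtain r where r: "r \<in> induced_auts A B \<pi>" "\<And>b. b \<in> carrier B \<Longrightarrow> \<pi> (r b) = twist_A (\<pi> b)"
    using induced_autsI[OF A.is_group B.is_group B.finite_carrier mono twist_A_iso] twist_B by blast
  have "r t = t \<otimes>\<^bsub>B\<^esub> z" if t: "B.order_four t" for t
  proof -
    have "t \<in> carrier B" "r t \<in> carrier B"
      using t r(1) by (auto simp: B.order_four_def induced_auts_def iso_def hom_def)
    moreover have "\<pi> (r t) = \<pi> (t \<otimes>\<^bsub>B\<^esub> z)"
      using r(2) twist_A_image[of t "t \<otimes>\<^bsub>B\<^esub> z"] F_order_four(1)[OF t] z \<open>t \<in> carrier B\<close>
      by (simp add: F_mult)
    ultimately show ?thesis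
      using mono z(1) by (auto simp: monomorphism_def dest: inj_onD)
  qed
  then show thesis
    using that c2_generator_preimage[OF z] r(1) by blast
qed

end

lemma Frob20xC2_twist_induced:
  assumes "group A" "C4xC2_group B" "monomorphism B A \<pi>" "A \<cong> Frob20 \<times>\<times> C 2"
  obtains z r where "C4xC2_group.nonsquare_involution B z" "\<forall>y\<in>carrier A. y \<otimes>\<^bsub>A\<^esub> \<pi> z = \<pi> z \<otimes>\<^bsub>A\<^esub> y"
    "r \<in> induced_auts A B \<pi>" "\<And>t. C4xC2_group.order_four B t \<Longrightarrow> r t = t \<otimes>\<^bsub>B\<^esub> z"
proof -
  obtain f where "f \<in> iso A Frob20xC2"
    using assms(4) by (auto simp: is_iso_def Frob20xC2_def)
  then interpret C4xC2_in_Frob20xC2 A B \<pi> f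
    using assms(1-3) by (intro C4xC2_in_Frob20xC2.intro C4xC2_in_Frob20xC2_axioms.intro)
  show thesis using induced_twist that by metis
qed

theorem mainTheorem19:
  fixes A1 :: "('a1, 'x1) monoid_scheme" and A2 :: "('a2, 'x2) monoid_scheme"
    and B :: "('b, 'x3) monoid_scheme" and \<pi>1 :: "'b \<Rightarrow> 'a1" and \<pi>2 :: "'b \<Rightarrow> 'a2"
    and C1 :: "('c1, 'y1) monoid_scheme" and C2 :: "('c2, 'y2) monoid_scheme"
    and D :: "('d, 'y3) monoid_scheme" and \<rho>1 :: "'d \<Rightarrow> 'c1" and \<rho>2 :: "'d \<Rightarrow> 'c2"
  assumes "finite_amalgam A1 A2 B \<pi>1 \<pi>2"
    and "primitive_amalgam A1 A2 B \<pi>1 \<pi>2"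
    and "amalgam_degree A1 A2 B \<pi>1 \<pi>2 5 2"
    and "A1 \<cong> Frob20 \<times>\<times> C 2"
    and "B \<cong> C 4 \<times>\<times> C 2"
    and "A2 \<cong> N16 \<or> A2 \<cong> M16"
    and "amalgam C1 C2 D \<rho>1 \<rho>2"
    and "same_type A1 A2 B \<pi>1 \<pi>2 C1 C2 D \<rho>1 \<rho>2"
  shows "isomorphic_amalgams A1 A2 B \<pi>1 \<pi>2 C1 C2 D \<rho>1 \<rho>2"
proof (rule isomorphic_amalgams_if_induced_auts_factor[OF _ assms(7,8)])
  show amalgam: "amalgam A1 A2 B \<pi>1 \<pi>2"
    using assms(1) by (simp add: finite_amalgam_def)
  then have A: "group A1" "group A2" "monomorphism B A1 \<pi>1" "monomorphism B A2 \<pi>2"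
    by (simp_all add: amalgam_def)
  interpret B: C4xC2_group B
    using amalgam assms(5) by (simp add: amalgam_def C4xC2_group_def C4xC2_group_axioms_def C4xC2_def)
  obtain z r where z: "B.nonsquare_involution z" and r: "r \<in> induced_auts A1 B \<pi>1"
    "\<And>t. B.order_four t \<Longrightarrow> r t = t \<otimes>\<^bsub>B\<^esub> z"
    and "\<forall>y\<in>carrier A1. y \<otimes>\<^bsub>A1\<^esub> \<pi>1 z = \<pi>1 z \<otimes>\<^bsub>A1\<^esub> y"
    using Frob20xC2_twist_induced[OF A(1) B.C4xC2_group_axioms A(3) assms(4)] by metis
  then have "\<exists>y\<in>carrier A2. y \<otimes>\<^bsub>A2\<^esub> \<pi>2 z \<noteq> \<pi>2 z \<otimes>\<^bsub>A2\<^esub> y"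
    using primitive_amalgam_no_common_central_involution[OF amalgam assms(2)]
    by (simp add: B.nonsquare_involution_def)
  then obtain t where t: "B.order_four t"
    and "\<And>\<psi>. \<psi> \<in> iso B B \<Longrightarrow> \<psi> t \<in> {t, t \<otimes>\<^bsub>B\<^esub> t \<otimes>\<^bsub>B\<^esub> t} \<Longrightarrow> \<psi> \<in> induced_auts A2 B \<pi>2"
    using index_two_C4xC2_induced_auts[OF A(2) B.C4xC2_group_axioms A(4) _ z] assms(3)
    by (auto simp: amalgam_degree_def)
  then show "\<exists>r\<in>induced_auts A1 B \<pi>1. \<theta> \<circ> r \<in> induced_auts A2 B \<pi>2" if "\<theta> \<in> iso B B" for \<theta>
    using C4xC2_aut_factorisation[OF B.C4xC2_group_axioms t z r(1) r(2)[OF t]] that by blast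
qed

end
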